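(* Let $b$ be a character of $\mathcal H_{CK}$ with $b(\bullet)=1$, and let $\tilde b$ be the unique character of $\mathcal H$ with $b=\tilde b\star\delta$. Then $b^{*-1}=\tilde b\star\delta^{*-1}$.
   Context: Let $k$ be a field of characteristic $0$. Rooted trees are finite and non-planar; $\bullet$ denotes the one-vertex tree. $\mathcal H$ is the free commutative $k$-algebra generated by isomorphism classes of rooted trees with at least one edge, with unit identified with $\bullet$; a character is a unital algebra morphism to $k$. A subforest of a rooted tree $t$ is either the trivial subforest $\bullet$ or a nonempty set of pairwise vertex-disjoint subtrees each with at least one edge, identified with the product of its components; $t/s$ is the tree obtained by contracting each component of $s$ to a vertex. $\mathcal H_{CK}$ is the Connes–Kreimer Hopf algebra of rooted forests (free commutative algebra on nonempty rooted trees, unit the empty forest $\mathbf 1$, coproduct $\Delta_{CK}$ by admissible cuts: $\Delta_{CK}(u)=\sum v\otimes w$ over decompositions of the vertex set of $u$ into $V\sqcup W$ with no vertex of $V$ strictly below a vertex of $W$), with convolution $b*c=(b\otimes c)\circ\Delta_{CK}$ and $*$-inverse $b^{*-1}$. $\delta$ is the character of $\mathcal H_{CK}$ with $\delta(\bullet)=1$ and $\delta(t)=0$ for all trees with at least two vertices. $\Phi:\mathcal H_{CK}\to\mathcal H\otimes\mathcal H_{CK}$ is the algebra morphism with $\Phi(\mathbf 1)=\bullet\otimes\mathbf 1$ and $\Phi(t)=\sum_s s\otimes t/s$ over subforests $s$ of $t$ for each nonempty tree $t$; for $\alpha\in\mathcal H^*$, $b\in\mathcal H_{CK}^*$, $\alpha\star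 b=(\alpha\otimes b)\circ\Phi$. (Every character $b$ of $\mathcal H_{CK}$ with $b(\bullet)=1$ is of the form $\tilde b\star\delta$ for a unique character $\tilde b$ of $\mathcal H$.) *)

theory Defs
  imports Main "HOL-Library.Multiset" "HOL-Library.Product_Plus"
begin

text \<open>A non-planar rooted tree is a root together with the multiset of subtrees
  hanging from its children; structural equality is tree isomorphism.\<close>
datatype tree = Node (kids: "tree multiset")

definition leaf :: tree where "leaf = Node {#}"

definition has_edge :: "tree \<Rightarrow> bool" where "has_edge t \<longleftrightarrow> t \<noteq> leaf"

text \<open>Forests (basis of H_CK, and of H) are multisets of trees.\<close>
type_synonym forest = "tree multiset"

definition mtimes :: "'a::comm_monoid_add multiset \<Rightarrow> 'a multiset \<Rightarrow> 'a multiset" where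
  "mtimes A B = sum_mset (image_mset (\<lambda>a. image_mset (\<lambda>b. a + b) B) A)"

text \<open>Independent choices: product over a multiset of multisets of alternatives.\<close>
definition mconv :: "'a::comm_monoid_add multiset multiset \<Rightarrow> 'a multiset" where
  "mconv MM = fold_mset mtimes {#0#} MM"

text \<open>cutsT t lists, with multiplicity, the pairs (forest on V, forest on W) for all
  decompositions of the vertex set into V and W with W downward closed
  (no vertex of V strictly below a vertex of W); W is empty or a tree containing the root.\<close>
primrec cutsT :: "tree \<Rightarrow> (forest \<times> forest) multiset" where
  "cutsT (Node M) =
     add_mset ({#Node M#}, {#})
       (image_mset (\<lambda>(v, w). (v, {#Node w#})) (mconv (image_mset cutsT M)))"

definition cutsF :: "forest \<Rightarrow> (forest \<times> forest) multiset" where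
  "cutsF F = mconv (image_mset cutsT F)"

text \<open>Linear forms on H_CK are given by their values on the basis of forests.\<close>
definition conv :: "(forest \<Rightarrow> 'k::field) \<Rightarrow> (forest \<Rightarrow> 'k) \<Rightarrow> forest \<Rightarrow> 'k" where
  "conv b c F = (\<Sum>(v, w) \<in># cutsF F. b v * c w)"

definition counitCK :: "forest \<Rightarrow> 'k::field" where
  "counitCK F = (if F = {#} then 1 else 0)"

definition conv_inv :: "(forest \<Rightarrow> 'k::field) \<Rightarrow> forest \<Rightarrow> 'k" where
  "conv_inv b = (THE c. conv b c = counitCK \<and> conv c b = counitCK)"

definition CK_character :: "(forest \<Rightarrow> 'k::field) \<Rightarrow> bool" where
  "CK_character b \<longleftrightarrow> b {#} = 1 \<and> (\<forall>F G. b (F + G) = b F * b G)"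

definition delta :: "forest \<Rightarrow> 'k::field" where
  "delta F = (\<Prod>t \<in># F. if t = leaf then 1 else 0)"

text \<open>subfT t enumerates subforests of t, which correspond bijectively to subsets E'
  of the edge set (components of (V,E') with at least one edge are the subtrees).
  Each entry (R, S, Q): R = component of the root, S = the other components
  with at least one edge, Q = the contracted tree t/s.\<close>
definition nontriv :: "tree \<Rightarrow> forest" where
  "nontriv r = (if has_edge r then {#r#} else {#})"

primrec subfT :: "tree \<Rightarrow> (tree \<times> forest \<times> tree) multiset" where
  "subfT (Node M) =
     image_mset (\<lambda>(a, f, q). (Node a, f, Node q))
       (mconv (image_mset (\<lambda>X. sum_mset (image_mset (\<lambda>(r, f, q).
            {# ({#r#}, f, kids q), ({#}, f + nontriv r, {#q#}) #}) X))
         (image_mset subfT M)))"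

text \<open>Phi(t) = sum over subforests s of s (x) t/s, for a nonempty tree t.
  The trivial subforest is the empty multiset (= unit of H = the one-vertex tree).\<close>
definition PhiT :: "tree \<Rightarrow> (forest \<times> forest) multiset" where
  "PhiT t = image_mset (\<lambda>(r, f, q). (f + nontriv r, {#q#})) (subfT t)"

text \<open>Phi extended as algebra morphism; Phi(1) = bullet (x) 1.\<close>
definition PhiF :: "forest \<Rightarrow> (forest \<times> forest) multiset" where
  "PhiF F = mconv (image_mset PhiT F)"

text \<open>Linear forms on H given by values on the monomial basis (multisets of trees
  with at least one edge; the empty multiset is the unit = bullet).\<close>
definition star :: "(forest \<Rightarrow> 'k::field) \<Rightarrow> (forest \<Rightarrow> 'k) \<Rightarrow> forest \<Rightarrow> 'k" where
  "star \<alpha> b F = (\<Sum>(s, q) \<in># PhiF F. \<alpha> s * b q)"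

definition H_character :: "(forest \<Rightarrow> 'k::field) \<Rightarrow> bool" where
  "H_character \<alpha> \<longleftrightarrow> \<alpha> {#} = 1 \<and>
     (\<forall>F G. (\<forall>t \<in># F + G. has_edge t) \<longrightarrow> \<alpha> (F + G) = \<alpha> F * \<alpha> G)"

end

theory Submission
  imports Defs
begin

text \<open>
  For an H-character alpha the map b \<mapsto> star alpha b is a morphism of
  convolution monoids on linear forms of H_CK:
    (a) star alpha counitCK = counitCK, and
    (b) star alpha (conv b c) = conv (star alpha b) (star alpha c).
  Property (b) is the dual of the cointeraction identity
    (id \<otimes> Delta_CK) \<circ> Phi = m_13 \<circ> (Phi \<otimes> Phi) \<circ> Delta_CK,
  which we prove on the level of multisets of basis terms: for a single tree by
  structural induction (every child either keeps or loses its edge to the root),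
  and for forests because both sides are multiplicative.
  The convolution inverse of delta is explicit, F \<mapsto> (-1)^(number of vertices of F),
  and a linear form b with b 1 = 1 has at most one convolution inverse (induction on
  the number of vertices). Hence conv b (star bt delta\<inverse>) = star bt (conv delta delta\<inverse>)
  = star bt counitCK = counitCK and symmetrically, so star bt delta\<inverse> is the inverse
  of b = star bt delta.
\<close>

section \<open>Formal sums of basis terms as multisets\<close>

text \<open>Coproducts and coactions are formal sums of basis terms, i.e. multisets.
  mbind A f substitutes the formal sum f x for every term x of A.\<close>
definition mbind :: "'a multiset \<Rightarrow> ('a \<Rightarrow> 'b multiset) \<Rightarrow> 'b multiset" where
  "mbind A f = (\<Sum>x\<in>#A. f x)"

lemma mbind_empty [simp]: "mbind {#} f = {#}"
  by (simp add: mbind_def)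

lemma mbind_add_mset [simp]: "mbind (add_mset x A) f = f x + mbind A f"
  by (simp add: mbind_def)

lemma mbind_union [simp]: "mbind (A + B) f = mbind A f + mbind B f"
  by (simp add: mbind_def)

lemma mbind_assoc: "mbind (mbind A f) g = mbind A (\<lambda>x. mbind (f x) g)"
  by (induction A) auto

lemma mbind_swap: "mbind A (\<lambda>a. mbind B (f a)) = mbind B (\<lambda>b. mbind A (\<lambda>a. f a b))"
  unfolding mbind_def by (rule sum_mset.swap)

lemma mbind_plus: "mbind A (\<lambda>x. f x + g x) = mbind A f + mbind A g"
  by (induction A) auto

lemma mbind_singleton: "mbind A (\<lambda>x. {#g x#}) = image_mset g A"
  by (simp add: mbind_def)

lemma mbind_doubleton: "mbind A (\<lambda>x. {#f x, g x#}) = image_mset f A + image_mset g A"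
  by (induction A) auto

lemma mbind_zero: "mbind A (\<lambda>x. {#}) = {#}"
  by (induction A) auto

lemma image_mbind: "image_mset g (mbind A f) = mbind A (\<lambda>x. image_mset g (f x))"
  by (induction A) auto

lemma mbind_image: "mbind (image_mset g A) f = mbind A (\<lambda>x. f (g x))"
  by (induction A) auto

lemma sum_mbind: "(\<Sum>x\<in>#mbind A f. \<phi> x) = (\<Sum>a\<in>#A. \<Sum>x\<in>#f a. \<phi> x)"
  by (induction A) auto

lemma mbind_cong: "(\<And>x. x \<in># A \<Longrightarrow> f x = g x) \<Longrightarrow> mbind A f = mbind A g"
  unfolding mbind_def by (metis image_mset_cong)

text \<open>The product of formal sums: mtimes A B expands (\<Sum>A) * (\<Sum>B) when terms
  multiply by addition (e.g. forests by union, tuples of forests componentwise).\<close>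
lemma mtimes_mbind: "mtimes A B = mbind A (\<lambda>a. mbind B (\<lambda>b. {#a + b#}))"
  by (simp add: mtimes_def mbind_def)

lemma mtimes_comm: "mtimes A B = mtimes B (A :: 'a::comm_monoid_add multiset)"
  unfolding mtimes_mbind by (subst mbind_swap) (simp add: add.commute)

lemma mtimes_assoc:
  "mtimes (mtimes A B) C = mtimes A (mtimes B (C :: 'a::comm_monoid_add multiset))"
  unfolding mtimes_mbind by (simp add: mbind_assoc add.assoc)

lemma image_mset_add_zero [simp]: "image_mset ((+) 0) A = (A::'a::monoid_add multiset)"
  by (induction A) auto

lemma mtimes_unit [simp]: "mtimes {#0#} A = A" "mtimes A {#0#} = A"
  unfolding mtimes_mbind by (simp_all add: mbind_singleton)

lemma mtimes_unit_tuples [simp]: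
  "mtimes A {#(0, 0)#} = A" "mtimes {#(0, 0)#} A = A"
  "mtimes B {#(0, 0, 0)#} = B" "mtimes {#(0, 0, 0)#} B = B"
  by (simp_all flip: zero_prod_def)

lemma mtimes_empty [simp]: "mtimes {#} A = {#}" "mtimes A {#} = {#}"
  unfolding mtimes_mbind by (simp_all add: mbind_zero)

lemma mtimes_add_mset: "mtimes (add_mset a A) B = image_mset ((+) a) B + mtimes A B"
  unfolding mtimes_mbind by (simp add: mbind_singleton)

lemma mtimes_single: "mtimes {#a#} {#b#} = {#a + b#}"
  unfolding mtimes_mbind by simp

lemma in_mtimes: "x \<in># mtimes A B \<Longrightarrow> \<exists>a b. a \<in># A \<and> b \<in># B \<and> x = a + b"
  unfolding mtimes_def by auto

lemma comp_fun_commute_mtimes: "comp_fun_commute (mtimes :: 'a::comm_monoid_add multiset \<Rightarrow> _)"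
proof
  fix x y :: "'a multiset"
  show "mtimes y \<circ> mtimes x = mtimes x \<circ> mtimes y"
    by (rule ext) (metis comp_apply mtimes_assoc mtimes_comm)
qed

lemma mconv_empty [simp]: "mconv {#} = {#0#}"
  by (simp add: mconv_def)

lemma mconv_add_mset [simp]: "mconv (add_mset X XS) = mtimes X (mconv XS)"
  by (simp add: mconv_def comp_fun_commute.fold_mset_add_mset[OF comp_fun_commute_mtimes])

lemma mconv_union [simp]: "mconv (XS + YS) = mtimes (mconv XS) (mconv YS)"
  by (induction XS) (auto simp: mtimes_assoc)

lemma mconv_closed:
  assumes "\<And>X x. X \<in># XS \<Longrightarrow> x \<in># X \<Longrightarrow> P x" and "P 0" and "\<And>x y. P x \<Longrightarrow> P y \<Longrightarrow> P (x + y)"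
    and "x \<in># mconv XS"
  shows "P x"
  using assms(1,4)
proof (induction XS arbitrary: x)
  case empty
  then show ?case using assms(2) by simp
next
  case (add X XS)
  then obtain a b where "a \<in># X" "b \<in># mconv XS" "x = a + b"
    using in_mtimes by fastforce
  then show ?case using add.IH[of b] add.prems(1) assms(3) by auto
qed

lemma mconv_additive_invariant:
  fixes \<phi> :: "'a::comm_monoid_add \<Rightarrow> 'c::comm_monoid_add"
  assumes "\<phi> 0 = 0" and "\<And>x y. \<phi> (x + y) = \<phi> x + \<phi> y"
    and "\<And>t x. t \<in># M \<Longrightarrow> x \<in># g t \<Longrightarrow> \<phi> x = \<psi> t"
    and "x \<in># mconv (image_mset g M)"
  shows "\<phi> x = (\<Sum>t\<in>#M. \<psi> t)"
  using assms(3,4)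
proof (induction M arbitrary: x)
  case empty
  then show ?case using assms(1) by simp
next
  case (add t M)
  then obtain a b where "a \<in># g t" "b \<in># mconv (image_mset g M)" "x = a + b"
    using in_mtimes by fastforce
  moreover have "\<phi> a = \<psi> t"
    using add.prems(1)[of t a] \<open>a \<in># g t\<close> by simp
  moreover have "\<phi> b = (\<Sum>t\<in>#M. \<psi> t)"
    using add.IH[of b] add.prems(1) \<open>b \<in># mconv (image_mset g M)\<close> by simp
  ultimately show ?case using assms(2) by simp
qed

lemma filter_mtimes:
  assumes "\<And>a b. P (a + b) \<longleftrightarrow> P a \<and> P b"
  shows "filter_mset P (mtimes A B) = mtimes (filter_mset P A) (filter_mset P B)"
proof (induction A)
  case empty
  then show ?case by simp
next
  case (add x A)
  have "filter_mset P (image_mset ((+) x) B) = (if P x then image_mset ((+) x) (filter_mset P B) else {#})"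
    by (induction B) (auto simp: assms)
  then show ?case using add by (simp add: mtimes_add_mset)
qed

lemma filter_mconv_singletons:
  assumes "\<And>a b. P (a + b) \<longleftrightarrow> P a \<and> P b" and "P 0"
    and "\<And>t. t \<in># M \<Longrightarrow> filter_mset P (g t) = {#f t#}"
  shows "filter_mset P (mconv (image_mset g M)) = {#\<Sum>t\<in>#M. f t#}"
  using assms(3)
proof (induction M)
  case empty
  then show ?case using assms(2) by simp
next
  case (add t M)
  then show ?case by (simp add: filter_mtimes[of P, OF assms(1)] mtimes_single)
qed

text \<open>Multiplicative maps from a monoid of terms to formal sums (algebra morphisms,
  read on basis elements). Substituting such a map commutes with products.\<close>
definition mtimes_hom :: "('a::comm_monoid_add \<Rightarrow> 'b::comm_monoid_add multiset) \<Rightarrow> bool" where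
  "mtimes_hom h \<longleftrightarrow> h 0 = {#0#} \<and> (\<forall>x y. h (x + y) = mtimes (h x) (h y))"

lemma mbind_mtimes:
  assumes "mtimes_hom h"
  shows "mbind (mtimes A B) h = mtimes (mbind A h) (mbind B h)"
proof -
  have "mbind (mtimes A B) h = mbind A (\<lambda>a. mbind B (\<lambda>b. mtimes (h a) (h b)))"
    using assms unfolding mtimes_hom_def by (simp add: mtimes_mbind mbind_assoc)
  also have "\<dots> = mtimes (mbind A h) (mbind B h)"
    unfolding mtimes_mbind mbind_assoc by (rule mbind_cong) (rule mbind_swap)
  finally show ?thesis .
qed

lemma mbind_mconv:
  assumes "mtimes_hom h"
  shows "mbind (mconv XS) h = mconv (image_mset (\<lambda>X. mbind X h) XS)"
  using assms by (induction XS) (auto simp: mbind_mtimes mtimes_hom_def)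

lemma mtimes_hom_mconv: "mtimes_hom (\<lambda>F. mconv (image_mset g F))"
  unfolding mtimes_hom_def by simp

lemma mtimes_hom_singleton:
  "L 0 = 0 \<Longrightarrow> (\<And>x y. L (x + y) = L x + L y) \<Longrightarrow> mtimes_hom (\<lambda>x. {#L x#})"
  unfolding mtimes_hom_def by (simp add: mtimes_single)

lemma mtimes_hom_comp:
  "mtimes_hom h \<Longrightarrow> L 0 = 0 \<Longrightarrow> (\<And>x y. L (x + y) = L x + L y) \<Longrightarrow> mtimes_hom (\<lambda>x. h (L x))"
  unfolding mtimes_hom_def by simp

text \<open>Combining two multiplicative maps by a biadditive pairing m of terms is multiplicative;
  this is how all the maps entering the cointeraction identity are built.\<close>
lemma mtimes_hom_pairing:
  assumes h: "mtimes_hom h" and k: "mtimes_hom k"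
    and m0: "m 0 0 = 0" and m_add: "\<And>a b c d. m (a + b) (c + d) = m a c + m b d"
  shows "mtimes_hom (\<lambda>x. mbind (h x) (\<lambda>a. image_mset (m a) (k x)))"
  unfolding mtimes_hom_def
proof (intro conjI allI)
  show "mbind (h 0) (\<lambda>a. image_mset (m a) (k 0)) = {#0#}"
    using h k m0 by (simp add: mtimes_hom_def)
next
  fix x y
  have "mbind (h (x + y)) (\<lambda>a. image_mset (m a) (k (x + y)))
      = mbind (h x) (\<lambda>a. mbind (h y) (\<lambda>b. mbind (k x) (\<lambda>c. mbind (k y) (\<lambda>d. {#m a c + m b d#}))))"
    using h k by (simp add: mtimes_hom_def mtimes_mbind mbind_assoc image_mbind m_add)
  also have "\<dots> = mbind (h x) (\<lambda>a. mbind (k x) (\<lambda>c. mbind (h y) (\<lambda>b. mbind (k y) (\<lambda>d. {#m a c + m b d#}))))"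
    by (rule mbind_cong) (rule mbind_swap)
  also have "\<dots> = mtimes (mbind (h x) (\<lambda>a. image_mset (m a) (k x)))
                         (mbind (h y) (\<lambda>b. image_mset (m b) (k y)))"
    by (simp add: mtimes_mbind mbind_assoc mbind_image)
  finally show "mbind (h (x + y)) (\<lambda>a. image_mset (m a) (k (x + y)))
      = mtimes (mbind (h x) (\<lambda>a. image_mset (m a) (k x))) (mbind (h y) (\<lambda>b. image_mset (m b) (k y)))" .
qed

section \<open>Cuts and the extraction-contraction coaction on basis terms\<close>

lemma cutsF_empty [simp]: "cutsF {#} = {#({#}, {#})#}"
  by (simp add: cutsF_def zero_prod_def)


lemma cutsF_union [simp]: "cutsF (F + G) = mtimes (cutsF F) (cutsF G)"
  by (simp add: cutsF_def)

lemma cutsF_single [simp]: "cutsF {#t#} = cutsT t"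
  by (simp add: cutsF_def)

lemma cutsT_eq:
  "cutsT t = add_mset ({#t#}, {#}) (image_mset (\<lambda>(v, w). (v, {#Node w#})) (cutsF (kids t)))"
  by (cases t) (simp add: cutsF_def)

lemma PhiF_empty [simp]: "PhiF {#} = {#({#}, {#})#}"
  by (simp add: PhiF_def zero_prod_def)

lemma PhiF_add_mset [simp]: "PhiF (add_mset t F) = mtimes (PhiT t) (PhiF F)"
  by (simp add: PhiF_def)



lemma mtimes_hom_cutsF: "mtimes_hom cutsF"
  using mtimes_hom_mconv[of cutsT] by (simp add: cutsF_def[abs_def])

lemma mtimes_hom_PhiF: "mtimes_hom PhiF"
  using mtimes_hom_mconv[of PhiT] by (simp add: PhiF_def[abs_def])

text \<open>The contribution of a child c to a subforest of its parent, as a triple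
  (kids of the root component, further components, kids of the contracted tree).
  Either the edge to c is kept: the root component r of c hangs from the parent's root
  component and the contracted c is merged into the contracted root; or the edge is
  dropped: r becomes a component of its own (if it has an edge) and the contracted c
  becomes a child of the contracted root.\<close>
definition child_subf :: "tree \<Rightarrow> (forest \<times> forest \<times> forest) multiset" where
  "child_subf c = mbind (subfT c)
     (\<lambda>(r, f, q). {#({#r#}, f, kids q), ({#}, f + nontriv r, {#q#})#})"

lemma subfT_eq:
  "subfT (Node M) = image_mset (\<lambda>(a, f, q). (Node a, f, Node q)) (mconv (image_mset child_subf M))"
  by (simp add: child_subf_def[abs_def] mbind_def image_mset.compositionality o_def)

declare subfT.simps [simp del]

text \<open>Extracted components always have at least one edge: this is where the
  multiplicativity of an H-character applies.\<close>
lemma subfT_has_edge: "(r, f, q) \<in># subfT t \<Longrightarrow> \<forall>x\<in>#f. has_edge x"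
proof (induction t arbitrary: r f q)
  case (Node M)
  from Node.prems obtain a q' where m: "(a, f, q') \<in># mconv (image_mset child_subf M)"
    unfolding subfT_eq by auto
  have "(\<lambda>(a, f, q). \<forall>x\<in>#f. has_edge x) (a, f, q')"
  proof (rule mconv_closed[OF _ _ _ m])
    fix X y assume "X \<in># image_mset child_subf M" and y: "y \<in># X"
    then obtain c where c: "c \<in># M" "X = child_subf c" by auto
    from y c(2) obtain r1 f1 q1 where "(r1, f1, q1) \<in># subfT c"
      "y = ({#r1#}, f1, kids q1) \<or> y = ({#}, f1 + nontriv r1, {#q1#})"
      unfolding child_subf_def mbind_def by auto
    with Node.IH[OF c(1)] show "(\<lambda>(a, f, q). \<forall>x\<in>#f. has_edge x) y"
      by (auto simp: nontriv_def split: if_splits)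
  qed (auto simp: zero_prod_def)
  then show ?case by simp
qed

lemma PhiT_has_edge: "(s, q) \<in># PhiT t \<Longrightarrow> \<forall>x\<in>#s. has_edge x"
  unfolding PhiT_def using subfT_has_edge by (fastforce simp: nontriv_def split: if_splits)

lemma PhiF_has_edge: "(s, q) \<in># PhiF F \<Longrightarrow> \<forall>x\<in>#s. has_edge x"
proof -
  assume m: "(s, q) \<in># PhiF F"
  have "(\<lambda>(s, q). \<forall>x\<in>#s. has_edge x) (s, q)"
    by (rule mconv_closed[OF _ _ _ m[unfolded PhiF_def]])
      (auto simp: zero_prod_def dest: PhiT_has_edge)
  then show ?thesis by simp
qed

lemma PhiF_contraction_nonempty: "p \<in># PhiF F \<Longrightarrow> F \<noteq> {#} \<Longrightarrow> snd p \<noteq> {#}"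
proof (induction F arbitrary: p)
  case empty
  then show ?case by simp
next
  case (add t F)
  then obtain a b where "a \<in># PhiT t" "p = a + b"
    using in_mtimes by fastforce
  then show ?case by (auto simp: PhiT_def)
qed

primrec nv :: "tree \<Rightarrow> nat" where
  "nv (Node M) = Suc (\<Sum>t\<in>#M. nv t)"

definition nvF :: "forest \<Rightarrow> nat" where
  "nvF F = (\<Sum>t\<in>#F. nv t)"

lemma nvF_simps [simp]:
  "nvF {#} = 0" "nvF (add_mset t F) = nv t + nvF F" "nvF (F + G) = nvF F + nvF G"
  by (simp_all add: nvF_def)

lemma nvF_pos: "F \<noteq> {#} \<Longrightarrow> nvF F > 0"
proof -
  have "nv t > 0" for t by (cases t) simp
  then show "F \<noteq> {#} \<Longrightarrow> nvF F > 0" by (cases F) auto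
qed

lemma cutsT_vertices: "(v, w) \<in># cutsT t \<Longrightarrow> nvF v + nvF w = nv t"
proof (induction t arbitrary: v w)
  case (Node M)
  show ?case
  proof (cases "(v, w) = ({#Node M#}, {#})")
    case True
    then show ?thesis by simp
  next
    case False
    with Node.prems obtain w' where "(v, w') \<in># cutsF M" "w = {#Node w'#}"
      by (subst (asm) cutsT_eq) auto
    moreover have "nvF v + nvF w' = (\<Sum>t\<in>#M. nv t)"
      using mconv_additive_invariant[of "\<lambda>p. nvF (fst p) + nvF (snd p)" M cutsT nv "(v, w')"]
        Node.IH \<open>(v, w') \<in># cutsF M\<close> by (fastforce simp: cutsF_def)
    ultimately show ?thesis by (simp add: nvF_def)
  qed
qed

lemma cutsF_vertices: "(v, w) \<in># cutsF F \<Longrightarrow> nvF v + nvF w = nvF F"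
  using mconv_additive_invariant[of "\<lambda>p. nvF (fst p) + nvF (snd p)" F cutsT nv "(v, w)"]
    cutsT_vertices by (fastforce simp: cutsF_def nvF_def)

lemma sum_mset_singleton_pairs:
  "(\<Sum>t\<in>#F. ({#t#}, {#})) = (F, {#})" "(\<Sum>t\<in>#F. ({#}, {#t#})) = ({#}, F)"
  by (induction F) (simp_all add: zero_prod_def)

lemma cutsF_empty_trunk: "filter_mset (\<lambda>p. snd p = {#}) (cutsF F) = {#(F, {#})#}"
proof -
  have "filter_mset (\<lambda>p. snd p = {#}) (cutsT t) = {#({#t#}, {#})#}" for t
    by (subst cutsT_eq) (simp add: image_mset_filter_mset_swap[symmetric] case_prod_unfold)
  then show ?thesis
    unfolding cutsF_def by (subst filter_mconv_singletons) (auto simp: sum_mset_singleton_pairs)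
qed

lemma cutsT_empty_pruned: "filter_mset (\<lambda>p. fst p = {#}) (cutsT t) = {#({#}, {#t#})#}"
proof (induction t)
  case (Node M)
  have "filter_mset (\<lambda>p. fst p = {#}) (cutsF M) = {#({#}, M)#}"
    unfolding cutsF_def by (subst filter_mconv_singletons) (use Node.IH in \<open>auto simp: sum_mset_singleton_pairs\<close>)
  then show ?case
    by (subst cutsT_eq) (simp add: image_mset_filter_mset_swap[symmetric] case_prod_unfold)
qed

lemma cutsF_empty_pruned: "filter_mset (\<lambda>p. fst p = {#}) (cutsF F) = {#({#}, F)#}"
  unfolding cutsF_def by (subst filter_mconv_singletons) (auto simp: cutsT_empty_pruned sum_mset_singleton_pairs)

section \<open>The cointeraction identity\<close>

text \<open>The two sides of (id \<otimes> Delta_CK) \<circ> Phi = m_13 \<circ> (Phi \<otimes> Phi) \<circ> Delta_CK on a basis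
  term, as formal sums of triples (extracted subforest, pruned forest, trunk):
  extract a subforest s and cut the contraction q; or cut into (v, w), extract
  subforests from v and from w and multiply them.\<close>
definition cut_after_extract :: "forest \<times> forest \<Rightarrow> (forest \<times> forest \<times> forest) multiset" where
  "cut_after_extract = (\<lambda>(s, q). image_mset (\<lambda>(v, w). (s, v, w)) (cutsF q))"

definition extract_after_cut :: "forest \<times> forest \<Rightarrow> (forest \<times> forest \<times> forest) multiset" where
  "extract_after_cut = (\<lambda>(v, w). mbind (PhiF v)
     (\<lambda>(s1, q1). image_mset (\<lambda>(s2, q2). (s1 + s2, q1, q2)) (PhiF w)))"

lemma mtimes_hom_cut_after_extract: "mtimes_hom cut_after_extract"
proof -
  have "mtimes_hom (\<lambda>x. mbind {#fst x#}
          (\<lambda>s. image_mset (\<lambda>(v, w). (s, v, w)) (cutsF (snd x))))"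
    by (rule mtimes_hom_pairing[OF mtimes_hom_singleton mtimes_hom_comp[OF mtimes_hom_cutsF]])
      (auto simp: zero_prod_def)
  then show ?thesis
    by (simp add: cut_after_extract_def case_prod_unfold)
qed

lemma mtimes_hom_extract_after_cut: "mtimes_hom extract_after_cut"
proof -
  have "mtimes_hom (\<lambda>x. mbind (PhiF (fst x))
          (\<lambda>p. image_mset (\<lambda>(s2, q2). (fst p + s2, snd p, q2)) (PhiF (snd x))))"
    by (rule mtimes_hom_pairing[OF mtimes_hom_comp[OF mtimes_hom_PhiF] mtimes_hom_comp[OF mtimes_hom_PhiF]])
      (auto simp: zero_prod_def add_ac)
  then show ?thesis
    by (simp add: extract_after_cut_def case_prod_unfold)
qed

text \<open>Root-keeping versions for a tree t, as formal sums of quadruples (R, S, v, W) with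
  R the root component, S the other components, v the pruned forest and W the trunk:
  extract and then cut the contraction keeping its root; or cut t keeping its root and
  extract from both parts.\<close>
definition extract_rootcut :: "tree \<Rightarrow> (tree \<times> forest \<times> forest \<times> tree) multiset" where
  "extract_rootcut t = mbind (subfT t)
     (\<lambda>(R, S, Q). image_mset (\<lambda>(v, w). (R, S, v, Node w)) (cutsF (kids Q)))"

definition rootcut_extract :: "tree \<Rightarrow> (tree \<times> forest \<times> forest \<times> tree) multiset" where
  "rootcut_extract t = mbind (cutsF (kids t)) (\<lambda>(v, w). mbind (PhiF v)
     (\<lambda>(s1, q1). image_mset (\<lambda>(R, S2, Q2). (R, s1 + S2, q1, Q2)) (subfT (Node w))))"

text \<open>On a tree, each side splits into the terms where the (contracted) tree is
  pruned entirely, and the root-keeping terms.\<close>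
definition prune_all :: "forest \<times> forest \<Rightarrow> forest \<times> forest \<times> forest" where
  "prune_all = (\<lambda>(s, q). (s, q, {#}))"

definition keep_root :: "tree \<times> forest \<times> forest \<times> tree \<Rightarrow> forest \<times> forest \<times> forest" where
  "keep_root = (\<lambda>(R, S, v, W). (S + nontriv R, v, {#W#}))"

lemma cut_after_extract_tree:
  "mbind (PhiT t) cut_after_extract
     = image_mset prune_all (PhiT t) + image_mset keep_root (extract_rootcut t)"
proof -
  have "mbind (PhiT t) cut_after_extract
      = mbind (subfT t) (\<lambda>x. {#prune_all ((\<lambda>(r, f, q). (f + nontriv r, {#q#})) x)#}
          + image_mset keep_root ((\<lambda>(R, S, Q). image_mset (\<lambda>(v, w). (R, S, v, Node w)) (cutsF (kids Q))) x))"
    unfolding PhiT_def mbind_image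
    by (rule mbind_cong) (auto simp: cutsT_eq cut_after_extract_def keep_root_def prune_all_def
        image_mset.compositionality o_def case_prod_unfold add_ac)
  then show ?thesis
    unfolding extract_rootcut_def PhiT_def image_mbind mbind_plus image_mset.compositionality
    by (simp add: mbind_singleton o_def)
qed

lemma extract_after_cut_tree:
  "mbind (cutsT t) extract_after_cut
     = image_mset prune_all (PhiT t) + image_mset keep_root (rootcut_extract t)"
proof -
  have "extract_after_cut (v, {#Node w#})
      = image_mset keep_root (mbind (PhiF v)
          (\<lambda>(s1, q1). image_mset (\<lambda>(R, S2, Q2). (R, s1 + S2, q1, Q2)) (subfT (Node w))))" for v w
    unfolding extract_after_cut_def image_mbind
    by (simp, rule mbind_cong)
      (simp add: PhiT_def keep_root_def image_mset.compositionality o_def case_prod_unfold add_ac)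
  then show ?thesis
    by (subst cutsT_eq) (simp add: extract_after_cut_def prune_all_def rootcut_extract_def
        zero_prod_def mbind_singleton mbind_image image_mbind case_prod_unfold)
qed

text \<open>The contribution of a child to the root-keeping sides, as quadruples
  (kids of the root component, other components, pruned forest, kids of the trunk).
  Extracting first: a child's subforest term (see child_subf), followed by a cut of its
  contribution to the contraction.\<close>
definition child_cut :: "forest \<times> forest \<times> forest \<Rightarrow> (forest \<times> forest \<times> forest \<times> forest) multiset" where
  "child_cut = (\<lambda>(a, f, q). image_mset (\<lambda>(v, w). (a, f, v, w)) (cutsF q))"

text \<open>Cutting first: a cut (v, w) of the child, followed by extraction from v and from
  the trunk part w (which still hangs from the root).\<close>
definition child_extract :: "forest \<times> forest \<Rightarrow> (forest \<times> forest \<times> forest \<times> forest) multiset" where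
  "child_extract = (\<lambda>(v, w). mbind (PhiF v)
     (\<lambda>(s1, q1). image_mset (\<lambda>(a, f, q). (a, s1 + f, q1, q)) (mconv (image_mset child_subf w))))"

lemma mtimes_hom_child_cut: "mtimes_hom child_cut"
proof -
  have "mtimes_hom (\<lambda>x. mbind {#(fst x, fst (snd x))#}
          (\<lambda>p. image_mset (\<lambda>(v, w). (fst p, snd p, v, w)) (cutsF (snd (snd x)))))"
    by (rule mtimes_hom_pairing[OF mtimes_hom_singleton mtimes_hom_comp[OF mtimes_hom_cutsF]])
      (auto simp: zero_prod_def)
  then show ?thesis
    by (simp add: child_cut_def case_prod_unfold)
qed

lemma mtimes_hom_child_extract: "mtimes_hom child_extract"
proof -
  have "mtimes_hom (\<lambda>x. mbind (PhiF (fst x))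
          (\<lambda>p. image_mset (\<lambda>(a, f, q). (a, fst p + f, snd p, q)) (mconv (image_mset child_subf (snd x)))))"
    by (rule mtimes_hom_pairing[OF mtimes_hom_comp[OF mtimes_hom_PhiF] mtimes_hom_comp[OF mtimes_hom_mconv]])
      (auto simp: zero_prod_def add_ac)
  then show ?thesis
    by (simp add: child_extract_def case_prod_unfold)
qed

text \<open>A child contributes in three ways: its edge to the root is kept (root component and
  trunk continue into the child), dropped (the child starts a new component and a new
  branch of the trunk), or the child is pruned entirely.\<close>
definition edge_kept :: "tree \<times> forest \<times> forest \<times> tree \<Rightarrow> forest \<times> forest \<times> forest \<times> forest" where
  "edge_kept = (\<lambda>(R, S, v, W). ({#R#}, S, v, kids W))"

definition edge_dropped :: "tree \<times> forest \<times> forest \<times> tree \<Rightarrow> forest \<times> forest \<times> forest \<times> forest" where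
  "edge_dropped = (\<lambda>(R, S, v, W). ({#}, S + nontriv R, v, {#W#}))"

definition child_pruned :: "forest \<times> forest \<Rightarrow> forest \<times> forest \<times> forest \<times> forest" where
  "child_pruned = (\<lambda>(s, q). ({#}, s, q, {#}))"

lemma child_cut_decomposition:
  "mbind (child_subf c) child_cut = image_mset edge_kept (extract_rootcut c)
     + image_mset child_pruned (PhiT c) + image_mset edge_dropped (extract_rootcut c)"
proof -
  let ?cuts = "\<lambda>(R, S, Q). image_mset (\<lambda>(v, w). (R, S, v, Node w)) (cutsF (kids Q))"
  have "mbind (child_subf c) child_cut = mbind (subfT c) (\<lambda>x. image_mset edge_kept (?cuts x)
     + {#child_pruned ((\<lambda>(r, f, q). (f + nontriv r, {#q#})) x)#} + image_mset edge_dropped (?cuts x))"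
    unfolding child_subf_def mbind_assoc
    by (rule mbind_cong) (auto simp: cutsT_eq child_cut_def edge_kept_def edge_dropped_def
        child_pruned_def image_mset.compositionality o_def case_prod_unfold add_ac)
  then show ?thesis
    unfolding extract_rootcut_def PhiT_def image_mbind mbind_plus image_mset.compositionality
    by (simp add: mbind_singleton o_def)
qed

lemma child_extract_decomposition:
  "mbind (cutsT c) child_extract = image_mset child_pruned (PhiT c)
     + image_mset edge_kept (rootcut_extract c) + image_mset edge_dropped (rootcut_extract c)"
proof -
  have "child_extract (v, {#Node w#})
      = image_mset edge_kept (mbind (PhiF v)
          (\<lambda>(s1, q1). image_mset (\<lambda>(R, S2, Q2). (R, s1 + S2, q1, Q2)) (subfT (Node w))))
      + image_mset edge_dropped (mbind (PhiF v)
          (\<lambda>(s1, q1). image_mset (\<lambda>(R, S2, Q2). (R, s1 + S2, q1, Q2)) (subfT (Node w))))" for v w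
    unfolding child_extract_def image_mbind mbind_plus[symmetric]
    by (simp, rule mbind_cong)
      (simp add: child_subf_def mbind_doubleton edge_kept_def edge_dropped_def
        image_mset.compositionality o_def case_prod_unfold add_ac)
  then show ?thesis
    by (subst cutsT_eq) (simp add: child_extract_def child_pruned_def rootcut_extract_def
        zero_prod_def mbind_singleton mbind_image image_mbind mbind_plus case_prod_unfold add_ac)
qed

text \<open>The root-keeping sides agree, by induction on the tree: both are products
  over the children, and the child contributions agree by the induction hypothesis.\<close>
lemma extract_rootcut_eq_rootcut_extract: "extract_rootcut t = rootcut_extract t"
proof (induction t)
  case (Node M)
  define regrow :: "forest \<times> forest \<times> forest \<times> forest \<Rightarrow> tree \<times> forest \<times> forest \<times> tree"
    where "regrow = (\<lambda>(a, f, v, w). (Node a, f, v, Node w))"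
  have "extract_rootcut (Node M) = image_mset regrow (mbind (mconv (image_mset child_subf M)) child_cut)"
    unfolding extract_rootcut_def subfT_eq mbind_image image_mbind
    by (rule mbind_cong) (auto simp: child_cut_def regrow_def image_mset.compositionality o_def)
  also have "\<dots> = image_mset regrow (mconv (image_mset (\<lambda>c. mbind (child_subf c) child_cut) M))"
    by (simp add: mbind_mconv[OF mtimes_hom_child_cut] image_mset.compositionality o_def)
  also have "\<dots> = image_mset regrow (mconv (image_mset (\<lambda>c. mbind (cutsT c) child_extract) M))"
  proof -
    have "mbind (child_subf c) child_cut = mbind (cutsT c) child_extract" if "c \<in># M" for c
      using Node.IH[OF that] by (simp add: child_cut_decomposition child_extract_decomposition add_ac)
    then show ?thesis by (metis (mono_tags, lifting) image_mset_cong)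
  qed
  also have "\<dots> = image_mset regrow (mbind (cutsF M) child_extract)"
    by (simp add: mbind_mconv[OF mtimes_hom_child_extract] image_mset.compositionality o_def cutsF_def)
  also have "\<dots> = rootcut_extract (Node M)"
    unfolding rootcut_extract_def subfT_eq image_mbind tree.sel
    by (auto simp: child_extract_def image_mbind regrow_def image_mset.compositionality o_def
        case_prod_unfold intro!: mbind_cong)
  finally show ?case .
qed

text \<open>The cointeraction identity on every forest: both sides are multiplicative, and on
  trees they agree by the previous lemma.\<close>
theorem cointeraction: "mbind (PhiF F) cut_after_extract = mbind (cutsF F) extract_after_cut"
proof -
  have "mbind (PhiF F) cut_after_extract = mconv (image_mset (\<lambda>t. mbind (PhiT t) cut_after_extract) F)"
    by (simp add: PhiF_def mbind_mconv[OF mtimes_hom_cut_after_extract] image_mset.compositionality o_def)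
  also have "\<dots> = mconv (image_mset (\<lambda>t. mbind (cutsT t) extract_after_cut) F)"
    by (simp add: cut_after_extract_tree extract_after_cut_tree extract_rootcut_eq_rootcut_extract)
  also have "\<dots> = mbind (cutsF F) extract_after_cut"
    by (simp add: cutsF_def mbind_mconv[OF mtimes_hom_extract_after_cut] image_mset.compositionality o_def)
  finally show ?thesis .
qed

section \<open>Convolution of linear forms on H_CK\<close>

lemma sum_mset_cong: "(\<And>x. x \<in># A \<Longrightarrow> f x = g x) \<Longrightarrow> (\<Sum>x\<in>#A. f x) = (\<Sum>x\<in>#A. g x)"
  by (metis image_mset_cong)

lemma sum_mset_neg: "(\<Sum>x\<in>#M. - f x) = - (\<Sum>x\<in>#M. f x :: 'a::ab_group_add)"
  by (induction M) auto

lemma sum_mset_partition: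
  "(\<Sum>x\<in>#M. h x) = (\<Sum>x\<in>#filter_mset P M. h x) + (\<Sum>x\<in>#filter_mset (\<lambda>x. \<not> P x) M. h x)"
  by (induction M) (auto simp: add_ac)

lemma sum_mtimes:
  fixes \<phi> :: "'a::comm_monoid_add \<Rightarrow> 'k::comm_semiring_1"
  assumes "\<And>x y. \<phi> (x + y) = \<phi> x * \<phi> y"
  shows "(\<Sum>x\<in>#mtimes A B. \<phi> x) = (\<Sum>x\<in>#A. \<phi> x) * (\<Sum>x\<in>#B. \<phi> x)"
  unfolding mtimes_mbind sum_mbind
  by (simp add: assms sum_mset_distrib_right) (simp add: sum_mset_distrib_left)

lemma conv_alt: "conv b c F = (\<Sum>p\<in>#cutsF F. b (fst p) * c (snd p))"
  by (simp add: conv_def case_prod_unfold)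

lemma conv_tree:
  "conv f g {#t#} = f {#t#} * g {#} + (\<Sum>p\<in>#cutsF (kids t). f (fst p) * g {#Node (snd p)#})"
  unfolding conv_alt cutsF_single
  by (subst cutsT_eq) (simp add: case_prod_unfold image_mset.compositionality o_def)

lemma conv_mult:
  fixes f g :: "forest \<Rightarrow> 'k::field"
  assumes "\<And>A B. f (A + B) = f A * f B" and "\<And>A B. g (A + B) = g A * g B"
  shows "conv f g (A + B) = conv f g A * conv f g B"
  unfolding conv_alt cutsF_union by (rule sum_mtimes) (simp add: assms)

lemma conv_characters_counit:
  fixes f g :: "forest \<Rightarrow> 'k::field"
  assumes "\<And>A B. f (A + B) = f A * f B" and "\<And>A B. g (A + B) = g A * g B"
    and "f {#} = 1" and "g {#} = 1"
    and "\<And>t. t \<in># F \<Longrightarrow> conv f g {#t#} = 0"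
  shows "conv f g F = counitCK F"
  using assms(5)
proof (induction F)
  case empty
  then show ?case by (simp add: conv_def counitCK_def assms)
next
  case (add t F)
  have "conv f g ({#t#} + F) = conv f g {#t#} * conv f g F"
    by (rule conv_mult[of f g, OF assms(1,2)])
  then show ?case using add by (simp add: counitCK_def)
qed

lemma conv_counit_right: "conv f counitCK F = f F"
proof -
  have "conv f counitCK F
      = (\<Sum>p\<in>#filter_mset (\<lambda>p. snd p = {#}) (cutsF F). f (fst p) * counitCK (snd p))
      + (\<Sum>p\<in>#filter_mset (\<lambda>p. snd p \<noteq> {#}) (cutsF F). f (fst p) * counitCK (snd p))"
    unfolding conv_alt by (rule sum_mset_partition)
  also have "\<dots> = f F"
    by (simp add: cutsF_empty_trunk counitCK_def sum_mset.neutral)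
  finally show ?thesis .
qed

text \<open>Left cancellation: if f 1 = 1, then c is determined by conv f c, by induction on
  the number of vertices (conv f c F = c F + terms of c on smaller trunks).\<close>
lemma conv_left_cancel:
  fixes f c c' :: "forest \<Rightarrow> 'k::field"
  assumes f0: "f {#} = 1" and eq: "conv f c = conv f c'"
  shows "c = c'"
proof
  fix F
  show "c F = c' F"
  proof (induction "nvF F" arbitrary: F rule: less_induct)
    case less
    let ?proper = "filter_mset (\<lambda>p. fst p \<noteq> {#}) (cutsF F)"
    have split: "conv f h F = h F + (\<Sum>p\<in>#?proper. f (fst p) * h (snd p))" for h
      unfolding conv_alt
      by (subst sum_mset_partition[where P = "\<lambda>p. fst p = {#}"]) (simp add: cutsF_empty_pruned f0)
    have "(\<Sum>p\<in>#?proper. f (fst p) * c (snd p)) = (\<Sum>p\<in>#?proper. f (fst p) * c' (snd p))"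
    proof (rule sum_mset_cong)
      fix p assume p: "p \<in># ?proper"
      then have "nvF (snd p) < nvF F"
        using cutsF_vertices[of "fst p" "snd p" F] nvF_pos[of "fst p"] by simp
      then show "f (fst p) * c (snd p) = f (fst p) * c' (snd p)" using less by simp
    qed
    with split[of c] split[of c'] eq show ?case by simp
  qed
qed

lemma conv_inv_eq:
  fixes b c :: "forest \<Rightarrow> 'k::field"
  assumes "b {#} = 1" and "conv b c = counitCK" and "conv c b = counitCK"
  shows "conv_inv b = c"
  unfolding conv_inv_def
proof (rule the_equality)
  show "conv b c = counitCK \<and> conv c b = counitCK" using assms by simp
next
  fix c' assume "conv b c' = counitCK \<and> conv c' b = counitCK"
  then show "c' = c" using conv_left_cancel[of b c' c] assms(1,2) by simp
qed

section \<open>The inverse of delta\<close>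

definition delta_inv :: "forest \<Rightarrow> 'k::field" where
  "delta_inv F = (-1) ^ nvF F"

lemma delta_mult: "delta (A + B) = (delta A * delta B :: 'k::field)"
  by (simp add: delta_def)

lemma delta_inv_mult: "delta_inv (A + B) = (delta_inv A * delta_inv B :: 'k::field)"
  by (simp add: delta_inv_def power_add)

lemma delta_empty [simp]: "delta {#} = (1::'k::field)"
  by (simp add: delta_def)

lemma delta_inv_empty [simp]: "delta_inv {#} = (1::'k::field)"
  by (simp add: delta_inv_def)

lemma delta_Node: "delta {#Node w#} = (counitCK w :: 'k::field)"
  by (simp add: delta_def counitCK_def leaf_def)

lemma delta_inv_Node: "delta_inv {#Node w#} = - (delta_inv w :: 'k::field)"
  by (simp add: delta_inv_def nvF_def)

lemma conv_delta_delta_inv: "conv delta delta_inv = (counitCK :: forest \<Rightarrow> 'k::field)"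
proof -
  have tree: "conv delta delta_inv {#t#} = (0::'k)" for t
  proof (induction t)
    case (Node M)
    have "conv delta delta_inv M = (counitCK M :: 'k)"
      by (rule conv_characters_counit[OF delta_mult delta_inv_mult delta_empty delta_inv_empty Node.IH])
    then have "(\<Sum>p\<in>#cutsF M. delta (fst p) * delta_inv {#Node (snd p)#}) = - (counitCK M :: 'k)"
      by (simp add: delta_inv_Node conv_alt sum_mset_neg)
    then show ?case by (simp add: conv_tree delta_Node delta_inv_def)
  qed
  show ?thesis
    by (rule ext, rule conv_characters_counit[OF delta_mult delta_inv_mult delta_empty delta_inv_empty tree])
qed

lemma conv_delta_inv_delta: "conv delta_inv delta = (counitCK :: forest \<Rightarrow> 'k::field)"
proof -
  have tree: "conv delta_inv delta {#t#} = (0::'k)" for t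
  proof -
    have "(\<Sum>p\<in>#cutsF (kids t). delta_inv (fst p) * delta {#Node (snd p)#}) = (delta_inv (kids t) :: 'k)"
      using conv_counit_right[of delta_inv "kids t"] by (simp add: delta_Node conv_alt)
    moreover have "delta_inv {#t#} = - (delta_inv (kids t) :: 'k)"
      by (cases t) (simp add: delta_inv_Node)
    ultimately show ?thesis by (simp add: conv_tree)
  qed
  show ?thesis
    by (rule ext, rule conv_characters_counit[OF delta_inv_mult delta_mult delta_inv_empty delta_empty tree])
qed

lemma conv_inv_delta: "conv_inv delta = (delta_inv :: forest \<Rightarrow> 'k::field)"
  by (rule conv_inv_eq) (simp_all add: conv_delta_delta_inv conv_delta_inv_delta)

section \<open>The action of H-characters is a morphism of convolution monoids\<close>

text \<open>star alpha preserves the unit, since Phi never contracts a nonempty forest to 1.\<close>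
lemma star_counit:
  assumes "\<alpha> {#} = (1::'k::field)"
  shows "star \<alpha> counitCK = counitCK"
proof
  fix F
  show "star \<alpha> counitCK F = counitCK F"
  proof (cases "F = {#}")
    case True
    then show ?thesis by (simp add: star_def counitCK_def assms)
  next
    case False
    have "star \<alpha> counitCK F = (\<Sum>p\<in>#PhiF F. \<alpha> (fst p) * counitCK (snd p))"
      by (simp add: star_def case_prod_unfold)
    also have "\<dots> = 0"
      by (rule sum_mset.neutral) (use PhiF_contraction_nonempty[OF _ False] in \<open>auto simp: counitCK_def\<close>)
    finally show ?thesis using False by (simp add: counitCK_def)
  qed
qed

text \<open>The dual of the cointeraction identity; multiplicativity of alpha is only used on
  products of extracted subforests, whose components all have an edge.\<close>
lemma star_conv:
  fixes \<alpha> b c :: "forest \<Rightarrow> 'k::field"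
  assumes \<alpha>_mult: "\<And>F G. \<forall>t\<in>#F + G. has_edge t \<Longrightarrow> \<alpha> (F + G) = \<alpha> F * \<alpha> G"
  shows "conv (star \<alpha> b) (star \<alpha> c) = star \<alpha> (conv b c)"
proof
  fix F
  define \<phi> where "\<phi> = (\<lambda>(s, v, w). \<alpha> s * b v * c w)"
  have "star \<alpha> (conv b c) F = (\<Sum>x\<in>#mbind (PhiF F) cut_after_extract. \<phi> x)"
    unfolding star_def sum_mbind
    by (rule sum_mset_cong) (auto simp: cut_after_extract_def conv_def \<phi>_def sum_mset_distrib_left
        image_mset.compositionality o_def case_prod_unfold mult.assoc)
  moreover have "conv (star \<alpha> b) (star \<alpha> c) F = (\<Sum>x\<in>#mbind (cutsF F) extract_after_cut. \<phi> x)"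
    unfolding conv_alt sum_mbind
  proof (rule sum_mset_cong)
    fix p
    have "star \<alpha> b (fst p) * star \<alpha> c (snd p) = (\<Sum>p1\<in>#PhiF (fst p). \<Sum>p2\<in>#PhiF (snd p).
            \<alpha> (fst p1) * b (snd p1) * (\<alpha> (fst p2) * c (snd p2)))"
      by (simp add: star_def case_prod_unfold sum_mset_distrib_right) (simp add: sum_mset_distrib_left)
    also have "\<dots> = (\<Sum>p1\<in>#PhiF (fst p). \<Sum>p2\<in>#PhiF (snd p).
            \<alpha> (fst p1 + fst p2) * b (snd p1) * c (snd p2))"
    proof (intro sum_mset_cong)
      fix p1 p2 assume "p1 \<in># PhiF (fst p)" and "p2 \<in># PhiF (snd p)"
      then have "\<forall>t\<in>#fst p1 + fst p2. has_edge t"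
        using PhiF_has_edge[of "fst p1" "snd p1"] PhiF_has_edge[of "fst p2" "snd p2"] by auto
      then show "\<alpha> (fst p1) * b (snd p1) * (\<alpha> (fst p2) * c (snd p2))
          = \<alpha> (fst p1 + fst p2) * b (snd p1) * c (snd p2)"
        using \<alpha>_mult by (simp add: ac_simps)
    qed
    also have "\<dots> = (\<Sum>x\<in>#extract_after_cut p. \<phi> x)"
      by (simp add: extract_after_cut_def \<phi>_def sum_mbind image_mset.compositionality o_def case_prod_unfold)
    finally show "star \<alpha> b (fst p) * star \<alpha> c (snd p) = (\<Sum>x\<in>#extract_after_cut p. \<phi> x)" .
  qed
  ultimately show "conv (star \<alpha> b) (star \<alpha> c) F = star \<alpha> (conv b c) F"
    using cointeraction[of F] by simp
qed

text \<open>The main theorem: star bt is a morphism of convolution monoids, so it maps the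
  inverse of delta to the inverse of b = star bt delta.\<close>
theorem mainTheorem9:
  fixes b bt :: "forest \<Rightarrow> 'k::field_char_0"
  assumes "CK_character b"
    and "b {#leaf#} = 1"
    and "H_character bt"
    and "b = star bt delta"
  shows "conv_inv b = star bt (conv_inv delta)"
proof -
  have bt_mult: "\<And>F G. \<forall>t\<in>#F + G. has_edge t \<Longrightarrow> bt (F + G) = bt F * bt G"
    and bt_unit: "bt {#} = 1"
    using assms(3) unfolding H_character_def by blast+
  have b_unit: "b {#} = 1"
    using assms(1) unfolding CK_character_def by blast
  have star_hom: "conv (star bt f) (star bt g) = star bt (conv f g)" for f g :: "forest \<Rightarrow> 'k"
    using bt_mult by (rule star_conv)
  have "conv b (star bt delta_inv) = counitCK"
    using star_counit[of bt, OF bt_unit] by (simp add: assms(4) star_hom conv_delta_delta_inv)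
  moreover have "conv (star bt delta_inv) b = counitCK"
    using star_counit[of bt, OF bt_unit] by (simp add: assms(4) star_hom conv_delta_inv_delta)
  ultimately have "conv_inv b = star bt delta_inv"
    by (intro conv_inv_eq b_unit)
  then show ?thesis
    by (simp add: conv_inv_delta)
qed

end
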